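(* Let $M\ge1$, $b>0$, let $A_2=\{z\in\mathbb{R}^M:\sum_iz_i\ge0\}$, and let $N_M(z;\nu,\Sigma)$ denote the $M$-variate normal density with mean $\nu$ and covariance $\Sigma$. If $0<\beta\le\beta'$ satisfy $\beta/\beta'\ge M^{-1/M}$, then $$\int_{A_2}\min\{N_M(z;b\mathbf{1}_M,\beta^{-1}I_M),\,N_M(z;b\mathbf{1}_M,\beta'^{-1}I_M)\}\,dz\;\ge\;\frac{1}{\sqrt M}\,\Phi(b\sqrt M\,\beta'^{1/2})\;\ge\;\frac{1}{2\sqrt M},$$ where $\Phi$ is the standard normal distribution function and $\mathbf{1}_M$ is the all-ones vector. Consequently, for the symmetric truncated mixture $\tilde\pi(z)\propto N_M(z;-b\mathbf{1}_M,I_M)\mathbf{1}_{A_1}(z)+N_M(z;b\mathbf{1}_M,I_M)\mathbf{1}_{A_2}(z)$ (with $A_1=\mathbb{R}^M\setminus A_2$), $N=M$, $\beta_k=M^{-(M-k)/M}$ and $\pi_k\propto\tilde\pi^{\beta_k}$, one has $\int_{\mathbb{R}^M}\min\{\pi_k,\pi_{k+1}\}\,dz\ge\frac{1}{2\sqrt M}$ for all $k\in\{0,\dots,N-1\}$.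
   Context: Lebesgue measure on $\mathbb{R}^M$; $I_M$ is the $M\times M$ identity matrix. *)

theory Defs
  imports "HOL-Analysis.Analysis" "HOL-Probability.Probability"
begin

definition mvn_density :: "real^'n \<Rightarrow> real^'n \<Rightarrow> real^'n^'n \<Rightarrow> real" where
  "mvn_density z \<nu> \<Sigma> =
     (2 * pi) powr (- real CARD('n) / 2) * (det \<Sigma>) powr (- 1 / 2)
       * exp (- (1 / 2) * ((z - \<nu>) \<bullet> (matrix_inv \<Sigma> *v (z - \<nu>))))"

definition std_normal_cdf :: "real \<Rightarrow> real" where
  "std_normal_cdf x = (LINT t:{..x}|lborel. std_normal_density t)"

definition ones :: "real^'n" where "ones = (\<chi> i. 1)"

definition A2 :: "(real^'n) set" where "A2 = {z. (\<Sum>i\<in>UNIV. z $ i) \<ge> 0}"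

definition A1 :: "(real^'n) set" where "A1 = UNIV - A2"

text \<open>Unnormalised symmetric truncated mixture (normalising constant cancels in pi_k).\<close>
definition tilde_pi :: "real \<Rightarrow> real^'n \<Rightarrow> real" where
  "tilde_pi b z = mvn_density z (- (b *\<^sub>R ones)) (mat 1) * indicator A1 z
                + mvn_density z (b *\<^sub>R ones) (mat 1) * indicator A2 z"

definition beta_seq :: "nat \<Rightarrow> nat \<Rightarrow> real" where
  "beta_seq M k = real M powr (- (real M - real k) / real M)"

definition pi_k :: "real \<Rightarrow> nat \<Rightarrow> real^'n \<Rightarrow> real" where
  "pi_k b k (z :: real^'n) = tilde_pi b z powr beta_seq CARD('n) k
                / (LINT (y :: real^'n)|lborel. tilde_pi b y powr beta_seq CARD('n) k)"

end

theory Submission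
  imports Defs
begin

(*
  For a scaled identity covariance c I the density N_M(z; m 1, c I) is the product
  of M one-dimensional N(m, c) densities, so under it the coordinates are independent and the
  coordinate sum z . 1 is N(M m, M c).  The Gaussian mass of the half-spaces
  A2 = {z . 1 >= 0} and A1 = {z . 1 < 0} is therefore Phi(+- M m / sqrt (M c)).
  For 0 < beta <= beta' the two densities with covariances beta^-1 I and beta'^-1 I satisfy
  the pointwise bound (beta/beta')^(M/2) N_beta' <= min (N_beta, N_beta'); the hypothesis
  beta/beta' >= M^(-1/M) makes the factor at least 1/sqrt M, and integrating over A2 gives the
  first claim, while Phi >= 1/2 on [0, oo) gives the second.
  For the tempered targets, tilde_pi^beta is a positive constant times the "tempered mixture"
  with components N(-+ b 1, beta^-1 I) restricted to A1 / A2, whose total mass 2 Phi (.) lies in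
  [1, 2].  Hence min (pi_k, pi_(k+1)) is at least half the minimum of two tempered mixtures, and
  the bound of the first part, applied on both half-spaces, yields the last claim with
  beta = beta_k, beta' = beta_(k+1), whose ratio is exactly M^(-1/M).
*)

lemma scaleR_mat_1: "(c::real) *\<^sub>R (mat 1 :: real^'n^'n) = mat c"
  by (simp add: vec_eq_iff mat_def)

lemma det_scaleR_mat_1: "det ((c::real) *\<^sub>R (mat 1 :: real^'n^'n)) = c ^ CARD('n)"
  by (metis scaleR_mat_1 matrix_scaleR det_matrix_scaleR)

lemma matrix_inv_scaleR_mat_1:
  assumes "(c::real) \<noteq> 0"
  shows "matrix_inv (c *\<^sub>R (mat 1 :: real^'n^'n)) = (1/c) *\<^sub>R mat 1"
proof -
  let ?A = "c *\<^sub>R (mat 1 :: real^'n^'n)" and ?B = "(1/c) *\<^sub>R (mat 1 :: real^'n^'n)"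
  have inverse: "?A ** ?B = mat 1 \<and> ?B ** ?A = mat 1"
    using assms by (simp add: scalar_matrix_assoc[symmetric] matrix_scalar_ac)
  have "?A ** matrix_inv ?A = mat 1 \<and> matrix_inv ?A ** ?A = mat 1"
    unfolding matrix_inv_def by (rule someI_ex) (use inverse in blast)
  then have right_inverse: "?A ** matrix_inv ?A = mat 1" ..
  have "matrix_inv ?A = ?B ** (?A ** matrix_inv ?A)"
    using inverse by (simp add: matrix_mul_assoc)
  also have "\<dots> = ?B" using right_inverse by simp
  finally show ?thesis .
qed

lemma mvn_density_isotropic:
  assumes c: "(c::real) > 0"
  shows "mvn_density z \<nu> (c *\<^sub>R (mat 1 :: real^'n^'n)) =
     (2*pi*c) powr (- real CARD('n) / 2) * exp (- ((norm (z - \<nu>))^2) / (2*c))"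
proof -
  have det: "det (c *\<^sub>R (mat 1 :: real^'n^'n)) powr (-1/2) = c powr (- real CARD('n) / 2)"
    using c by (simp add: det_scaleR_mat_1 powr_realpow[symmetric] powr_powr)
  have quad: "(z - \<nu>) \<bullet> (matrix_inv (c *\<^sub>R (mat 1 :: real^'n^'n)) *v (z - \<nu>))
      = (norm (z - \<nu>))^2 / c"
    using c by (simp add: matrix_inv_scaleR_mat_1 scaleR_matrix_vector_assoc[symmetric]
        power2_norm_eq_inner)
  show ?thesis
    unfolding mvn_density_def det quad using c by (simp add: powr_mult)
qed

lemma mvn_density_isotropic_nonneg:
  "c > 0 \<Longrightarrow> mvn_density z \<nu> (c *\<^sub>R (mat 1 :: real^'n^'n)) \<ge> 0"
  by (simp add: mvn_density_isotropic)

lemma mvn_density_isotropic_measurable[measurable]: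
  assumes "c > 0"
  shows "(\<lambda>z. mvn_density z \<nu> (c *\<^sub>R (mat 1 :: real^'n^'n))) \<in> borel_measurable borel"
  unfolding mvn_density_isotropic[OF assms] by measurable

lemma ones_inner_Basis: "b \<in> Basis \<Longrightarrow> (ones :: real^'n) \<bullet> b = 1"
  by (auto simp: Basis_vec_def ones_def inner_axis)

lemma sum_components_eq_inner_ones: "(\<Sum>i\<in>UNIV. (z::real^'n) $ i) = z \<bullet> ones"
  by (simp add: inner_vec_def ones_def)

lemma mvn_density_isotropic_prod:
  assumes c: "(c::real) > 0"
  shows "mvn_density z (m *\<^sub>R ones) (c *\<^sub>R (mat 1 :: real^'n^'n)) =
     (\<Prod>b\<in>Basis. normal_density m (sqrt c) (z \<bullet> b))"
proof -
  have norm_sq: "(norm (z - m *\<^sub>R ones))^2 = (\<Sum>b\<in>Basis. (z \<bullet> b - m)^2)"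
  proof -
    have "(norm (z - m *\<^sub>R ones))^2
        = (\<Sum>b\<in>Basis. ((z - m *\<^sub>R ones) \<bullet> b) * ((z - m *\<^sub>R ones) \<bullet> b))"
      unfolding power2_norm_eq_inner by (rule euclidean_inner)
    also have "\<dots> = (\<Sum>b\<in>Basis. (z \<bullet> b - m)^2)"
      by (rule sum.cong) (simp_all add: inner_diff_left ones_inner_Basis power2_eq_square)
    finally show ?thesis .
  qed
  have const: "(1 / sqrt (2*pi*c)) ^ CARD('n) = (2*pi*c) powr (- real CARD('n) / 2)"
  proof -
    have "1 / sqrt (2*pi*c) = (2*pi*c) powr (-1/2)"
      using c by (simp add: powr_minus_divide powr_half_sqrt)
    thus ?thesis using c by (simp add: powr_realpow[symmetric] powr_powr)
  qed
  have "(\<Prod>b\<in>Basis. normal_density m (sqrt c) (z \<bullet> b)) =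
        (\<Prod>b\<in>(Basis::(real^'n) set). 1 / sqrt (2*pi*c) * exp (- ((z \<bullet> b - m)^2) / (2*c)))"
    using c by (simp add: normal_density_def)
  also have "\<dots> = (1 / sqrt (2*pi*c)) ^ CARD('n)
      * exp (\<Sum>b\<in>(Basis::(real^'n) set). - ((z \<bullet> b - m)^2) / (2*c))"
    unfolding prod.distrib exp_sum prod_constant by (simp add: exp_sum)
  finally show ?thesis
    unfolding mvn_density_isotropic[OF c] norm_sq const
    by (simp add: sum_divide_distrib[symmetric] sum_negf)
qed

definition normal_measure :: "real \<Rightarrow> real \<Rightarrow> real measure" where
  "normal_measure m s = density lborel (\<lambda>x. ennreal (normal_density m s x))"

lemma prob_space_normal_measure: "s > 0 \<Longrightarrow> prob_space (normal_measure m s)"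
  unfolding normal_measure_def by (rule prob_space_normal_density)

lemma sets_normal_measure[simp, measurable_cong]: "sets (normal_measure m s) = sets borel"
  by (simp add: normal_measure_def)

lemma space_normal_measure[simp]: "space (normal_measure m s) = UNIV"
  by (simp add: normal_measure_def)

lemma indicator_PiE_eq_prod:
  assumes "f \<in> extensional I" "finite I"
  shows "(indicator (Pi\<^sub>E I A) f :: ennreal) = (\<Prod>i\<in>I. indicator (A i) (f i))"
proof (cases "f \<in> Pi\<^sub>E I A")
  case True thus ?thesis by (auto simp: indicator_def PiE_def intro!: prod.neutral)
next
  case False
  then obtain i where "i \<in> I" "f i \<notin> A i" using assms(1) by (auto simp: PiE_def Pi_def)
  then show ?thesis using False assms(2) by (auto simp: indicator_def intro!: prod_zero)
qed

lemma PiM_density_normal: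
  fixes m s :: real
  assumes s: "s > 0" and I: "finite I"
  shows "density (PiM I (\<lambda>_. lborel)) (\<lambda>f. \<Prod>i\<in>I. ennreal (normal_density m s (f i)))
       = PiM I (\<lambda>_. normal_measure m s)"
proof -
  interpret N: product_sigma_finite "\<lambda>_. normal_measure m s"
    by (simp add: product_sigma_finite_def prob_space_imp_sigma_finite
        prob_space_normal_measure s)
  interpret L: product_sigma_finite "\<lambda>_. (lborel :: real measure)"
    by (simp add: product_sigma_finite_def sigma_finite_lborel)
  let ?d = "\<lambda>f. \<Prod>i\<in>I. ennreal (normal_density m s (f i))"
  show ?thesis
  proof (rule N.PiM_eqI[OF I])
    show "sets (density (PiM I (\<lambda>_. lborel)) ?d) = sets (PiM I (\<lambda>_. normal_measure m s))"
      unfolding sets_density by (rule sets_PiM_cong) auto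
    fix A assume A: "\<And>i. i \<in> I \<Longrightarrow> A i \<in> sets (normal_measure m s)"
    have box: "Pi\<^sub>E I A \<in> sets (PiM I (\<lambda>_. lborel))"
      using A by (intro sets_PiM_I_finite I) auto
    have "emeasure (density (PiM I (\<lambda>_. lborel)) ?d) (Pi\<^sub>E I A)
       = (\<integral>\<^sup>+f. ?d f * indicator (Pi\<^sub>E I A) f \<partial>PiM I (\<lambda>_. lborel))"
      by (rule emeasure_density[OF _ box]) measurable
    also have "\<dots> = (\<integral>\<^sup>+f. (\<Prod>i\<in>I. ennreal (normal_density m s (f i)) * indicator (A i) (f i))
                       \<partial>PiM I (\<lambda>_. lborel))"
    proof (intro nn_integral_cong)
      fix f assume "f \<in> space (PiM I (\<lambda>_. (lborel :: real measure)))"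
      then have "f \<in> extensional I" by (simp add: space_PiM PiE_def)
      then show "?d f * indicator (Pi\<^sub>E I A) f
          = (\<Prod>i\<in>I. ennreal (normal_density m s (f i)) * indicator (A i) (f i))"
        by (simp only: indicator_PiE_eq_prod[OF _ I] prod.distrib)
    qed
    also have "\<dots> = (\<Prod>i\<in>I. (\<integral>\<^sup>+x. ennreal (normal_density m s x) * indicator (A i) x \<partial>lborel))"
      by (rule L.product_nn_integral_prod[OF I]) (use A in auto)
    also have "\<dots> = (\<Prod>i\<in>I. emeasure (normal_measure m s) (A i))"
      unfolding normal_measure_def using A by (intro prod.cong refl) (subst emeasure_density, auto)
    finally show "emeasure (density (PiM I (\<lambda>_. lborel)) ?d) (Pi\<^sub>E I A)
       = (\<Prod>i\<in>I. emeasure (normal_measure m s) (A i))" .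
  qed
qed

(* Under the product of N(m, s^2) laws, the coordinates are independent N(m, s^2) variables, so
   their sum over a finite nonempty index set I is N(|I| m, |I| s^2). *)
lemma PiM_normal_sum_distributed:
  fixes m s :: real
  assumes s: "s > 0" and I: "finite I" "I \<noteq> {}"
  defines "P \<equiv> PiM I (\<lambda>_. normal_measure m s)"
  shows "prob_space P"
    and "distributed P lborel (\<lambda>f. \<Sum>i\<in>I. f i)
           (\<lambda>x. ennreal (normal_density (real (card I) * m) (sqrt (real (card I) * s\<^sup>2)) x))"
proof -
  interpret PP: product_prob_space "\<lambda>_. normal_measure m s" I
    using prob_space_normal_measure[OF s]
    by (simp add: product_prob_space_def product_sigma_finite_def product_prob_space_axioms_def
        prob_space_imp_sigma_finite)
  show PS: "prob_space P" unfolding P_def by (rule prob_space_PiM) (rule prob_space_normal_measure[OF s])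
  interpret PS: prob_space P by (rule PS)
  have marginal: "distr P borel (\<lambda>f. f i) = normal_measure m s" if "i \<in> I" for i
  proof -
    have "distr P borel (\<lambda>f. f i) = distr P (normal_measure m s) (\<lambda>f. f i)"
      by (rule distr_cong) auto
    also have "\<dots> = normal_measure m s" unfolding P_def by (rule PP.PiM_component[OF that])
    finally show ?thesis .
  qed
  have indep: "PS.indep_vars (\<lambda>_. borel) (\<lambda>i f. f i) I"
  proof (subst PS.indep_vars_iff_distr_eq_PiM'[OF I(2)])
    show "(\<lambda>f. f i) \<in> measurable P borel" if "i \<in> I" for i
    proof -
      have "(\<lambda>f. f i) \<in> measurable P (normal_measure m s)"
        unfolding P_def by (rule measurable_component_singleton[OF that])
      thus ?thesis by (simp add: measurable_cong_sets[OF refl sets_normal_measure])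
    qed
    have "distr P (PiM I (\<lambda>_. borel)) (\<lambda>x. \<lambda>i\<in>I. x i) = distr P P (\<lambda>x. x)"
    proof (rule distr_cong)
      show "sets (PiM I (\<lambda>_. borel)) = sets P"
        unfolding P_def by (rule sets_PiM_cong) auto
      show "x \<in> space P \<Longrightarrow> restrict x I = x" for x
        unfolding P_def by (auto simp: space_PiM PiE_def extensional_restrict)
    qed simp
    also have "\<dots> = PiM I (\<lambda>i. distr P borel (\<lambda>x. x i))"
      unfolding distr_id2[OF refl] P_def by (rule PiM_cong) (simp_all add: marginal[unfolded P_def])
    finally show "distr P (PiM I (\<lambda>_. borel)) (\<lambda>x. \<lambda>i\<in>I. x i) = PiM I (\<lambda>i. distr P borel (\<lambda>x. x i))" .
  qed
  have normal: "distributed P lborel (\<lambda>f. f i) (\<lambda>x. ennreal (normal_density m s x))"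
    if "i \<in> I" for i
  proof -
    have "distr P lborel (\<lambda>f. f i) = distr P borel (\<lambda>f. f i)"
      by (rule distr_cong) auto
    also have "\<dots> = density lborel (\<lambda>x. ennreal (normal_density m s x))"
      using marginal[OF that] by (simp add: normal_measure_def)
    finally show ?thesis unfolding distributed_def using that unfolding P_def by simp
  qed
  have "distributed P lborel (\<lambda>f. \<Sum>i\<in>I. f i)
     (\<lambda>x. ennreal (normal_density (\<Sum>i\<in>I. m) (sqrt (\<Sum>i\<in>I. s\<^sup>2)) x))"
    by (rule PS.sum_indep_normal[of I "\<lambda>i f. f i"]) (use indep normal s I in auto)
  then show "distributed P lborel (\<lambda>f. \<Sum>i\<in>I. f i)
     (\<lambda>x. ennreal (normal_density (real (card I) * m) (sqrt (real (card I) * s\<^sup>2)) x))"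
    by simp
qed

lemma inner_sum_Basis_eq: "b \<in> Basis \<Longrightarrow> (\<Sum>b'\<in>Basis. f b' *\<^sub>R b') \<bullet> b = (f b :: real)"
  for b :: "'a::euclidean_space"
  by (simp add: inner_sum_left inner_Basis if_distrib sum.delta cong: if_cong)

lemma isotropic_gaussian_eq_distr_PiM:
  assumes c: "c > 0"
  shows "density lborel (\<lambda>z::real^'n. ennreal (mvn_density z (m *\<^sub>R ones) (c *\<^sub>R mat 1)))
       = distr (PiM Basis (\<lambda>_. normal_measure m (sqrt c))) borel (\<lambda>f. \<Sum>b\<in>Basis. f b *\<^sub>R b)"
proof -
  let ?h = "\<lambda>z::real^'n. ennreal (mvn_density z (m *\<^sub>R ones) (c *\<^sub>R mat 1))"
  let ?S = "\<lambda>f. \<Sum>b\<in>(Basis :: (real^'n) set). f b *\<^sub>R b"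
  let ?L = "PiM (Basis :: (real^'n) set) (\<lambda>_. lborel)"
  have h: "?h \<in> borel_measurable borel" using c by measurable
  have S: "?S \<in> measurable ?L borel" by measurable
  have "density lborel ?h = density (distr ?L borel ?S) ?h"
    by (simp only: lborel_eq[where 'a="real^'n"])
  also have "\<dots> = distr (density ?L (\<lambda>f. ?h (?S f))) borel ?S"
    by (rule density_distr[OF h S])
  also have "density ?L (\<lambda>f. ?h (?S f))
     = density ?L (\<lambda>f. \<Prod>b\<in>Basis. ennreal (normal_density m (sqrt c) (f b)))"
    using h S c
    by (intro density_cong AE_I2) (simp_all add: mvn_density_isotropic_prod inner_sum_Basis_eq prod_ennreal)
  also have "\<dots> = PiM Basis (\<lambda>_. normal_measure m (sqrt c))"
    using c by (intro PiM_density_normal) simp_all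
  finally show ?thesis .
qed

(* Phi as a nonnegative integral, the form in which it arises from measures of half-lines. *)
lemma std_normal_cdf_eq_nn_integral:
  "std_normal_cdf t = enn2real (\<integral>\<^sup>+x. ennreal (std_normal_density x) * indicator {..t} x \<partial>lborel)"
proof -
  have "std_normal_cdf t = enn2real (\<integral>\<^sup>+x. ennreal (indicator {..t} x *\<^sub>R std_normal_density x) \<partial>lborel)"
    unfolding std_normal_cdf_def set_lebesgue_integral_def by (rule integral_eq_nn_integral) auto
  also have "(\<integral>\<^sup>+x. ennreal (indicator {..t} x *\<^sub>R std_normal_density x) \<partial>lborel)
     = (\<integral>\<^sup>+x. ennreal (std_normal_density x) * indicator {..t} x \<partial>lborel)"
    by (intro nn_integral_cong) (auto simp: indicator_def)
  finally show ?thesis .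
qed

(* For X ~ N(mu, sigma^2): P(X >= 0) = Phi(mu/sigma) and P(X < 0) = Phi(-mu/sigma),
   by standardising with the affine maps (mu -+ X)/sigma. *)
lemma normal_halfline_prob:
  assumes M: "prob_space M" and X: "distributed M lborel X (\<lambda>x. ennreal (normal_density \<mu> \<sigma> x))"
    and \<sigma>: "\<sigma> > 0"
  shows "measure M {x\<in>space M. X x \<ge> 0} = std_normal_cdf (\<mu>/\<sigma>)"
    and "measure M {x\<in>space M. X x < 0} = std_normal_cdf (-\<mu>/\<sigma>)"
proof -
  interpret prob_space M by (rule M)
  have Y: "distributed M lborel (\<lambda>x. \<mu>/\<sigma> + (-1/\<sigma>) * X x) (\<lambda>x. ennreal (std_normal_density x))"
    using normal_density_affine[OF X \<sigma>, of "-1/\<sigma>" "\<mu>/\<sigma>"] \<sigma> by (simp add: field_simps)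
  have "{x\<in>space M. X x \<ge> 0} = (\<lambda>x. \<mu>/\<sigma> + (-1/\<sigma>) * X x) -` {..\<mu>/\<sigma>} \<inter> space M"
    using \<sigma> by (auto simp: field_simps zero_le_mult_iff)
  then have "emeasure M {x\<in>space M. X x \<ge> 0}
      = (\<integral>\<^sup>+x. ennreal (std_normal_density x) * indicator {..\<mu>/\<sigma>} x \<partial>lborel)"
    using distributed_emeasure[OF Y, of "{..\<mu>/\<sigma>}"] by simp
  then show "measure M {x\<in>space M. X x \<ge> 0} = std_normal_cdf (\<mu>/\<sigma>)"
    by (simp add: measure_def std_normal_cdf_eq_nn_integral)
  have Y': "distributed M lborel (\<lambda>x. -\<mu>/\<sigma> + (1/\<sigma>) * X x) (\<lambda>x. ennreal (std_normal_density x))"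
    using normal_density_affine[OF X \<sigma>, of "1/\<sigma>" "-\<mu>/\<sigma>"] \<sigma> by (simp add: field_simps)
  have "{x\<in>space M. X x < 0} = (\<lambda>x. -\<mu>/\<sigma> + (1/\<sigma>) * X x) -` {..<-\<mu>/\<sigma>} \<inter> space M"
    using \<sigma> by (auto simp: field_simps mult_less_0_iff)
  then have "emeasure M {x\<in>space M. X x < 0}
      = (\<integral>\<^sup>+x. ennreal (std_normal_density x) * indicator {..<-\<mu>/\<sigma>} x \<partial>lborel)"
    using distributed_emeasure[OF Y', of "{..<-\<mu>/\<sigma>}"] by simp
  also have "\<dots> = (\<integral>\<^sup>+x. ennreal (std_normal_density x) * indicator {..-\<mu>/\<sigma>} x \<partial>lborel)"
    \<comment> \<open>the endpoint is a Lebesgue null set\<close>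
    by (intro nn_integral_cong_AE, rule AE_mp[OF AE_lborel_singleton[of "-\<mu>/\<sigma>"]])
       (auto simp: indicator_def)
  finally show "measure M {x\<in>space M. X x < 0} = std_normal_cdf (-\<mu>/\<sigma>)"
    by (simp add: measure_def std_normal_cdf_eq_nn_integral)
qed

(* By symmetry of N(0,1) the two half-lines have equal mass, so Phi(0) = 1/2. *)
lemma std_normal_cdf_0: "std_normal_cdf 0 = 1/2"
proof -
  let ?M = "density lborel (\<lambda>x. ennreal (std_normal_density x))"
  have M: "prob_space ?M" by (rule prob_space_normal_density) simp
  interpret prob_space ?M by (rule M)
  have X: "distributed ?M lborel (\<lambda>x. x) (\<lambda>x. ennreal (normal_density 0 1 x))"
    unfolding distributed_def by (simp add: distr_id2)
  have nonneg: "{x\<in>space ?M. x \<ge> 0} \<in> events" by measurable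
  have "{x\<in>space ?M. x < 0} = space ?M - {x\<in>space ?M. x \<ge> 0}" by auto
  then have "measure ?M {x\<in>space ?M. x < 0} = 1 - measure ?M {x\<in>space ?M. x \<ge> 0}"
    using prob_compl[OF nonneg] by simp
  then show ?thesis using normal_halfline_prob[OF M X zero_less_one] by simp
qed

lemma std_normal_cdf_mono: "s \<le> t \<Longrightarrow> std_normal_cdf s \<le> std_normal_cdf t"
  unfolding std_normal_cdf_def set_lebesgue_integral_def
  by (intro integral_mono integrable_mult_indicator) (auto simp: indicator_def)

lemma std_normal_cdf_ge_half: "t \<ge> 0 \<Longrightarrow> std_normal_cdf t \<ge> 1/2"
  using std_normal_cdf_mono[of 0 t] std_normal_cdf_0 by simp

lemma std_normal_cdf_le_1: "std_normal_cdf t \<le> 1"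
proof -
  have "std_normal_cdf t \<le> (\<integral>x. std_normal_density x \<partial>lborel)"
    unfolding std_normal_cdf_def set_lebesgue_integral_def
    by (intro integral_mono integrable_mult_indicator) (auto simp: indicator_def)
  then show ?thesis by simp
qed

lemma A2_borel[measurable]: "(A2 :: (real^'n) set) \<in> sets borel"
  unfolding A2_def sum_components_eq_inner_ones
  by (intro borel_closed closed_Collect_le continuous_intros)

lemma A1_borel[measurable]: "(A1 :: (real^'n) set) \<in> sets borel"
  unfolding A1_def by measurable

lemma inner_ones_sum_Basis: "(\<Sum>b\<in>Basis. f b *\<^sub>R b) \<bullet> (ones::real^'n) = (\<Sum>b\<in>Basis. f b)"
proof -
  have "(\<Sum>b\<in>Basis. f b *\<^sub>R b) \<bullet> (ones::real^'n) = (\<Sum>b\<in>Basis. f b * (b \<bullet> ones))"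
    by (simp add: inner_sum_left)
  also have "\<dots> = (\<Sum>b\<in>Basis. f b)"
    by (intro sum.cong refl) (simp add: inner_commute[of _ ones] ones_inner_Basis)
  finally show ?thesis .
qed

lemma set_integral_nonneg_eq_measure_density:
  assumes f: "f \<in> borel_measurable borel" "\<And>z. f z \<ge> 0" and S: "S \<in> sets borel"
  shows "(LINT z:S|lborel. f z) = measure (density lborel (\<lambda>z. ennreal (f z))) S"
proof -
  have "(LINT z:S|lborel. f z) = enn2real (\<integral>\<^sup>+z. ennreal (indicator S z *\<^sub>R f z) \<partial>lborel)"
    unfolding set_lebesgue_integral_def using f S by (intro integral_eq_nn_integral) auto
  also have "(\<integral>\<^sup>+z. ennreal (indicator S z *\<^sub>R f z) \<partial>lborel) = (\<integral>\<^sup>+z. ennreal (f z) * indicator S z \<partial>lborel)"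
    by (intro nn_integral_cong) (auto simp: indicator_def)
  also have "\<dots> = emeasure (density lborel (\<lambda>z. ennreal (f z))) S"
    using f S by (subst emeasure_density) auto
  finally show ?thesis by (simp add: measure_def)
qed

(* Masses of the isotropic Gaussian N_M(m 1, c I): it is a probability density, and the
   half-spaces A2 and A1 carry Phi(+- M m / sqrt (M c)), since z . 1 ~ N(M m, M c). *)
lemma isotropic_gaussian_masses:
  fixes m c :: real
  assumes c: "c > 0"
  shows "integrable lborel (\<lambda>z::real^'n. mvn_density z (m *\<^sub>R ones) (c *\<^sub>R mat 1))"
    and "(LINT z:(A2::(real^'n) set)|lborel. mvn_density z (m *\<^sub>R ones) (c *\<^sub>R mat 1))
           = std_normal_cdf (real CARD('n) * m / sqrt (real CARD('n) * c))"
    and "(LINT z:(A1::(real^'n) set)|lborel. mvn_density z (m *\<^sub>R ones) (c *\<^sub>R mat 1))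
           = std_normal_cdf (- (real CARD('n) * m) / sqrt (real CARD('n) * c))"
proof -
  let ?N = "\<lambda>z::real^'n. mvn_density z (m *\<^sub>R ones) (c *\<^sub>R mat 1)"
  let ?P = "PiM (Basis :: (real^'n) set) (\<lambda>_. normal_measure m (sqrt c))"
  let ?S = "\<lambda>f. \<Sum>b\<in>(Basis :: (real^'n) set). f b *\<^sub>R b"
  note law = isotropic_gaussian_eq_distr_PiM[OF c, of m]
  note sum_law = PiM_normal_sum_distributed[of "sqrt c" "Basis :: (real^'n) set" m]
  have P: "prob_space ?P" using c by (intro sum_law(1)) simp_all
  have sum_normal: "distributed ?P lborel (\<lambda>f. \<Sum>b\<in>(Basis :: (real^'n) set). f b)
           (\<lambda>x. ennreal (normal_density (real CARD('n) * m) (sqrt (real CARD('n) * c)) x))"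
    using sum_law(2) c by simp
  have S: "?S \<in> measurable ?P borel" by measurable
  have N: "?N \<in> borel_measurable borel" using c by measurable
  have mass: "(LINT z:T|lborel. ?N z) = measure ?P (?S -` T \<inter> space ?P)" if T: "T \<in> sets borel" for T
    unfolding set_integral_nonneg_eq_measure_density[OF N mvn_density_isotropic_nonneg[OF c] T] law
    by (rule measure_distr[OF S T])
  have "(\<integral>\<^sup>+z. ennreal (?N z) \<partial>lborel) = emeasure (distr ?P borel ?S) UNIV"
    unfolding law[symmetric] using N by (subst emeasure_density) auto
  also have "\<dots> = 1"
    using prob_space.emeasure_space_1[OF P] by (simp add: emeasure_distr[OF S])
  finally show "integrable lborel ?N"
    using N by (intro integrableI_nonneg) (auto simp: mvn_density_isotropic_nonneg[OF c])
  have sigma: "sqrt (real CARD('n) * c) > 0" using c by simp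
  have "?S -` A2 \<inter> space ?P = {f\<in>space ?P. (\<Sum>b\<in>(Basis :: (real^'n) set). f b) \<ge> 0}"
    by (auto simp: A2_def sum_components_eq_inner_ones inner_ones_sum_Basis)
  then show "(LINT z:(A2::(real^'n) set)|lborel. ?N z)
           = std_normal_cdf (real CARD('n) * m / sqrt (real CARD('n) * c))"
    using mass[OF A2_borel] normal_halfline_prob(1)[OF P sum_normal sigma] by simp
  have "?S -` A1 \<inter> space ?P = {f\<in>space ?P. (\<Sum>b\<in>(Basis :: (real^'n) set). f b) < 0}"
    by (auto simp: A1_def A2_def sum_components_eq_inner_ones inner_ones_sum_Basis)
  then show "(LINT z:(A1::(real^'n) set)|lborel. ?N z)
           = std_normal_cdf (- (real CARD('n) * m) / sqrt (real CARD('n) * c))"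
    using mass[OF A1_borel] normal_halfline_prob(2)[OF P sum_normal sigma] by simp
qed

(* Lowering the inverse temperature from beta' to beta costs at most the factor
   (beta/beta')^(M/2) in the density, uniformly in z: the normalising constants differ by
   exactly this factor and the exponential factor only increases. *)
lemma isotropic_gaussian_temper_bound:
  fixes \<beta> \<beta>' :: real and z \<nu> :: "real^'n"
  assumes \<beta>: "0 < \<beta>" "\<beta> \<le> \<beta>'"
  shows "(\<beta>/\<beta>') powr (real CARD('n)/2) * mvn_density z \<nu> ((1/\<beta>') *\<^sub>R mat 1)
         \<le> mvn_density z \<nu> ((1/\<beta>) *\<^sub>R mat 1)"
proof -
  define a where "a = real CARD('n) / 2"
  define d where "d = (norm (z - \<nu>))^2"
  have \<beta>': "0 < \<beta>'" using \<beta> by simp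
  have exp_mono: "exp (- d / (2 * (1/\<beta>'))) \<le> exp (- d / (2 * (1/\<beta>)))"
    using \<beta> \<beta>' by (simp add: d_def mult_left_mono)
  have const: "(\<beta>/\<beta>') powr a * (2*pi*(1/\<beta>')) powr (-a) = (2*pi*(1/\<beta>)) powr (-a)"
    using \<beta> \<beta>' by (simp add: powr_def ln_mult ln_div exp_add[symmetric] algebra_simps)
  have "(\<beta>/\<beta>') powr a * mvn_density z \<nu> ((1/\<beta>') *\<^sub>R mat 1)
      = ((\<beta>/\<beta>') powr a * (2*pi*(1/\<beta>')) powr (-a)) * exp (- d / (2 * (1/\<beta>')))"
    using \<beta>' by (simp add: mvn_density_isotropic a_def d_def)
  also have "\<dots> = (2*pi*(1/\<beta>)) powr (-a) * exp (- d / (2 * (1/\<beta>')))"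
    by (simp only: const)
  also have "\<dots> \<le> (2*pi*(1/\<beta>)) powr (-a) * exp (- d / (2 * (1/\<beta>)))"
    by (rule mult_left_mono[OF exp_mono]) simp
  also have "\<dots> = mvn_density z \<nu> ((1/\<beta>) *\<^sub>R mat 1)"
    using \<beta> by (simp add: mvn_density_isotropic a_def d_def)
  finally show ?thesis by (simp add: a_def)
qed

lemma isotropic_gaussian_overlap_bound:
  fixes \<beta> \<beta>' m :: real and S :: "(real^'n) set"
  assumes \<beta>: "0 < \<beta>" "\<beta> \<le> \<beta>'" and S: "S \<in> sets borel"
  shows "set_integrable lborel S (\<lambda>z. min (mvn_density z (m *\<^sub>R ones) ((1/\<beta>) *\<^sub>R mat 1))
                                        (mvn_density z (m *\<^sub>R ones) ((1/\<beta>') *\<^sub>R mat 1)))"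
    and "(LINT z:S|lborel. min (mvn_density z (m *\<^sub>R ones) ((1/\<beta>) *\<^sub>R mat 1))
                               (mvn_density z (m *\<^sub>R ones) ((1/\<beta>') *\<^sub>R mat 1)))
         \<ge> (\<beta>/\<beta>') powr (real CARD('n)/2)
             * (LINT z:S|lborel. mvn_density z (m *\<^sub>R ones) ((1/\<beta>') *\<^sub>R mat 1))"
proof -
  have \<beta>': "0 < \<beta>'" using \<beta> by simp
  let ?N = "\<lambda>z::real^'n. mvn_density z (m *\<^sub>R ones) ((1/\<beta>) *\<^sub>R mat 1)"
  let ?N' = "\<lambda>z::real^'n. mvn_density z (m *\<^sub>R ones) ((1/\<beta>') *\<^sub>R mat 1)"
  have N': "set_integrable lborel S ?N'"
    unfolding set_integrable_def using S \<beta>'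
    by (intro integrable_mult_indicator isotropic_gaussian_masses(1)) auto
  show overlap: "set_integrable lborel S (\<lambda>z. min (?N z) (?N' z))"
  proof (rule set_integrable_bound[OF N'])
    show "set_borel_measurable lborel S (\<lambda>z. min (?N z) (?N' z))"
    proof -
      have "?N \<in> borel_measurable borel" "?N' \<in> borel_measurable borel"
        using \<beta> \<beta>' by (intro mvn_density_isotropic_measurable; simp)+
      then show ?thesis unfolding set_borel_measurable_def using S by measurable
    qed
    show "AE x in lborel. x \<in> S \<longrightarrow> norm (min (?N x) (?N' x)) \<le> norm (?N' x)"
      using \<beta> \<beta>' by (intro AE_I2) (auto simp: mvn_density_isotropic_nonneg)
  qed
  have pointwise: "(\<beta>/\<beta>') powr (real CARD('n)/2) * ?N' z \<le> min (?N z) (?N' z)" for z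
  proof -
    have "(\<beta>/\<beta>') powr (real CARD('n)/2) \<le> 1" using \<beta> by (intro powr_le1) auto
    then have "(\<beta>/\<beta>') powr (real CARD('n)/2) * ?N' z \<le> ?N' z"
      using \<beta>' mvn_density_isotropic_nonneg[of "1/\<beta>'" z "m *\<^sub>R ones"]
      by (intro mult_left_le_one_le) auto
    then show ?thesis using isotropic_gaussian_temper_bound[OF \<beta>] by simp
  qed
  have "(LINT z:S|lborel. (\<beta>/\<beta>') powr (real CARD('n)/2) * ?N' z) \<le> (LINT z:S|lborel. min (?N z) (?N' z))"
    by (rule set_integral_mono) (use N' overlap pointwise in auto)
  then show "(LINT z:S|lborel. min (?N z) (?N' z)) \<ge> (\<beta>/\<beta>') powr (real CARD('n)/2) * (LINT z:S|lborel. ?N' z)"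
    by simp
qed

lemma temper_factor_ge_inverse_sqrt:
  fixes \<beta> \<beta>' :: real
  assumes "0 < \<beta>" "\<beta> \<le> \<beta>'" and ratio: "\<beta>/\<beta>' \<ge> real M powr (- 1 / real M)" and M: "M \<ge> 1"
  shows "(\<beta>/\<beta>') powr (real M / 2) \<ge> 1 / sqrt (real M)"
proof -
  have "1 / sqrt (real M) = real M powr (- 1 / real M * (real M / 2))"
    using M by (simp add: powr_minus_divide powr_half_sqrt)
  also have "\<dots> = (real M powr (- 1 / real M)) powr (real M / 2)" by (simp add: powr_powr)
  also have "\<dots> \<le> (\<beta>/\<beta>') powr (real M / 2)" by (rule powr_mono2) (use ratio in auto)
  finally show ?thesis .
qed

lemma halfspace_gaussian_argument:
  assumes "\<beta>' > 0" "M > 0"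
  shows "real M * b / sqrt (real M * (1/\<beta>')) = b * sqrt (real M) * sqrt \<beta>'"
proof -
  have "real M = sqrt (real M) * sqrt (real M)" by simp
  then show ?thesis using assms by (simp add: real_sqrt_mult real_sqrt_divide field_simps)
qed

lemma tempered_gaussians_overlap_A2:
  fixes b \<beta> \<beta>' :: real
  assumes b: "b > 0" and \<beta>: "0 < \<beta>" "\<beta> \<le> \<beta>'"
    and ratio: "\<beta> / \<beta>' \<ge> real CARD('n) powr (- 1 / real CARD('n))"
  shows "(LINT z:(A2 :: (real^'n) set)|lborel.
              min (mvn_density z (b *\<^sub>R ones) ((1 / \<beta>) *\<^sub>R mat 1))
                  (mvn_density z (b *\<^sub>R ones) ((1 / \<beta>') *\<^sub>R mat 1)))
            \<ge> 1 / sqrt (real CARD('n)) * std_normal_cdf (b * sqrt (real CARD('n)) * sqrt \<beta>')"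
proof -
  have \<beta>': "\<beta>' > 0" using \<beta> by simp
  let ?\<Phi> = "std_normal_cdf (b * sqrt (real CARD('n)) * sqrt \<beta>')"
  have "(LINT z:(A2 :: (real^'n) set)|lborel. mvn_density z (b *\<^sub>R ones) ((1 / \<beta>') *\<^sub>R mat 1))
      = ?\<Phi>"
    using isotropic_gaussian_masses(2)[of "1/\<beta>'" b, where 'n='n] \<beta>'
      halfspace_gaussian_argument[OF \<beta>', of "CARD('n)" b] by simp
  then have "(LINT z:(A2 :: (real^'n) set)|lborel. min (mvn_density z (b *\<^sub>R ones) ((1 / \<beta>) *\<^sub>R mat 1))
                  (mvn_density z (b *\<^sub>R ones) ((1 / \<beta>') *\<^sub>R mat 1)))
        \<ge> (\<beta>/\<beta>') powr (real CARD('n)/2) * ?\<Phi>"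
    using isotropic_gaussian_overlap_bound(2)[OF \<beta> A2_borel, of b, where 'n='n] by simp
  moreover have "(\<beta>/\<beta>') powr (real CARD('n)/2) * ?\<Phi> \<ge> 1 / sqrt (real CARD('n)) * ?\<Phi>"
    using temper_factor_ge_inverse_sqrt[OF \<beta> ratio] std_normal_cdf_ge_half[of "b * sqrt (real CARD('n)) * sqrt \<beta>'"] b \<beta>'
    by (intro mult_right_mono) (auto simp: Suc_leI)
  ultimately show ?thesis by linarith
qed

(* Tempering: raising N_M(z; nu, I) to the power beta gives, up to the constant below,
   the Gaussian N_M(z; nu, beta^-1 I). *)
definition tempering_const :: "nat \<Rightarrow> real \<Rightarrow> real" where
  "tempering_const M \<beta> = (2*pi) powr (- real M * \<beta> / 2) / (2*pi*(1/\<beta>)) powr (- real M / 2)"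

lemma tempering_const_pos: "\<beta> > 0 \<Longrightarrow> tempering_const M \<beta> > 0"
  by (simp add: tempering_const_def)

lemma mvn_density_identity_powr:
  assumes \<beta>: "\<beta> > 0"
  shows "mvn_density z \<nu> (mat 1 :: real^'n^'n) powr \<beta>
       = tempering_const CARD('n) \<beta> * mvn_density z \<nu> ((1/\<beta>) *\<^sub>R mat 1)"
proof -
  define d where "d = (norm (z - \<nu>))^2"
  have "mvn_density z \<nu> (mat 1 :: real^'n^'n) = (2*pi) powr (- real CARD('n) / 2) * exp (- d / 2)"
    using mvn_density_isotropic[of 1 z \<nu>] by (simp add: d_def)
  then have "mvn_density z \<nu> (mat 1 :: real^'n^'n) powr \<beta>
      = (2*pi) powr (- real CARD('n) * \<beta> / 2) * exp (- d * \<beta> / 2)"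
    by (simp add: powr_mult powr_powr powr_def exp_add[symmetric] algebra_simps)
  also have "\<dots> = tempering_const CARD('n) \<beta>
      * ((2*pi*(1/\<beta>)) powr (- real CARD('n) / 2) * exp (- d / (2 * (1/\<beta>))))"
    using \<beta> by (simp add: tempering_const_def)
  also have "\<dots> = tempering_const CARD('n) \<beta> * mvn_density z \<nu> ((1/\<beta>) *\<^sub>R mat 1)"
    using \<beta> by (simp add: mvn_density_isotropic d_def)
  finally show ?thesis .
qed

(* The tempered mixture: the component N(-b 1, beta^-1 I) on A1 and N(b 1, beta^-1 I) on A2.
   It is tilde_pi^beta up to a positive constant. *)
definition tempered_mixture :: "real \<Rightarrow> real \<Rightarrow> real^'n \<Rightarrow> real" where
  "tempered_mixture b \<beta> z = mvn_density z ((-b) *\<^sub>R ones) ((1/\<beta>) *\<^sub>R mat 1) * indicator A1 z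
                          + mvn_density z (b *\<^sub>R ones) ((1/\<beta>) *\<^sub>R mat 1) * indicator A2 z"

lemma tilde_pi_powr:
  assumes "\<beta> > 0"
  shows "tilde_pi b z powr \<beta> = tempering_const CARD('n) \<beta> * tempered_mixture b \<beta> (z::real^'n)"
  using assms
  by (cases "z \<in> A2")
     (simp_all add: A1_def tilde_pi_def tempered_mixture_def mvn_density_identity_powr scaleR_minus_left)

lemma tempered_mixture_nonneg: "\<beta> > 0 \<Longrightarrow> tempered_mixture b \<beta> z \<ge> 0"
  by (simp add: tempered_mixture_def mvn_density_isotropic_nonneg)

lemma integral_piecewise:
  fixes f g :: "'a::euclidean_space \<Rightarrow> real"
  assumes f: "set_integrable lborel A f" and g: "set_integrable lborel B g"
  shows "integrable lborel (\<lambda>z. f z * indicator A z + g z * indicator B z)"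
    and "(\<integral>z. f z * indicator A z + g z * indicator B z \<partial>lborel)
         = (LINT z:A|lborel. f z) + (LINT z:B|lborel. g z)"
proof -
  have "integrable lborel (\<lambda>z. f z * indicator A z)" "integrable lborel (\<lambda>z. g z * indicator B z)"
    using f g by (simp_all add: set_integrable_def mult.commute)
  then show "integrable lborel (\<lambda>z. f z * indicator A z + g z * indicator B z)"
    and "(\<integral>z. f z * indicator A z + g z * indicator B z \<partial>lborel)
         = (LINT z:A|lborel. f z) + (LINT z:B|lborel. g z)"
    by (simp_all add: set_lebesgue_integral_def mult.commute)
qed

(* The tempered mixture is integrable with total mass 2 Phi(b sqrt M sqrt beta), by symmetry
   of the two halves. *)
lemma tempered_mixture_integral:
  assumes \<beta>: "\<beta> > 0"
  shows "integrable lborel (tempered_mixture b \<beta> :: real^'n \<Rightarrow> real)"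
    and "(\<integral>z. tempered_mixture b \<beta> (z::real^'n) \<partial>lborel)
          = 2 * std_normal_cdf (b * sqrt (real CARD('n)) * sqrt \<beta>)"
proof -
  have c: "1/\<beta> > 0" using \<beta> by simp
  have parts: "set_integrable lborel (A1 :: (real^'n) set) (\<lambda>z. mvn_density z ((-b) *\<^sub>R ones) ((1/\<beta>) *\<^sub>R mat 1))"
    "set_integrable lborel (A2 :: (real^'n) set) (\<lambda>z. mvn_density z (b *\<^sub>R ones) ((1/\<beta>) *\<^sub>R mat 1))"
    unfolding set_integrable_def
    by (intro integrable_mult_indicator isotropic_gaussian_masses(1)[OF c]; simp)+
  note piecewise = integral_piecewise[OF parts]
  show "integrable lborel (tempered_mixture b \<beta> :: real^'n \<Rightarrow> real)"
    using piecewise(1) unfolding tempered_mixture_def[abs_def] .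
  show "(\<integral>z. tempered_mixture b \<beta> (z::real^'n) \<partial>lborel)
          = 2 * std_normal_cdf (b * sqrt (real CARD('n)) * sqrt \<beta>)"
    unfolding tempered_mixture_def piecewise(2)
    using isotropic_gaussian_masses(2)[OF c, of b, where 'n='n]
      isotropic_gaussian_masses(3)[OF c, of "-b", where 'n='n] halfspace_gaussian_argument[OF \<beta>, of "CARD('n)" b]
    by simp
qed

(* The overlap of two tempered mixtures: on each half-space the overlap bound for Gaussians
   applies, and both halves carry Gaussian mass Phi(b sqrt M sqrt beta'). *)
lemma tempered_mixture_overlap:
  assumes \<beta>: "0 < \<beta>" "\<beta> \<le> \<beta>'"
  shows "integrable lborel (\<lambda>z::real^'n. min (tempered_mixture b \<beta> z) (tempered_mixture b \<beta>' z))"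
    and "(\<integral>z. min (tempered_mixture b \<beta> z) (tempered_mixture b \<beta>' (z::real^'n)) \<partial>lborel)
         \<ge> 2 * (\<beta>/\<beta>') powr (real CARD('n)/2) * std_normal_cdf (b * sqrt (real CARD('n)) * sqrt \<beta>')"
proof -
  have \<beta>': "\<beta>' > 0" "1/\<beta>' > 0" using \<beta> by simp_all
  let ?ovl = "\<lambda>m z::real^'n. min (mvn_density z (m *\<^sub>R ones) ((1/\<beta>) *\<^sub>R mat 1))
                                (mvn_density z (m *\<^sub>R ones) ((1/\<beta>') *\<^sub>R mat 1))"
  let ?\<Phi> = "std_normal_cdf (b * sqrt (real CARD('n)) * sqrt \<beta>')"
  have split: "min (tempered_mixture b \<beta> z) (tempered_mixture b \<beta>' z)
      = ?ovl (-b) z * indicator A1 z + ?ovl b z * indicator A2 z" for z :: "real^'n"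
    by (cases "z \<in> A2") (auto simp: tempered_mixture_def A1_def)
  note A1 = isotropic_gaussian_overlap_bound[OF \<beta> A1_borel, of "-b", where 'n='n]
  note A2 = isotropic_gaussian_overlap_bound[OF \<beta> A2_borel, of b, where 'n='n]
  note piecewise = integral_piecewise[OF A1(1) A2(1)]
  show "integrable lborel (\<lambda>z::real^'n. min (tempered_mixture b \<beta> z) (tempered_mixture b \<beta>' z))"
    unfolding split using piecewise(1) .
  have "(LINT z:(A1 :: (real^'n) set)|lborel. mvn_density z ((-b) *\<^sub>R ones) ((1/\<beta>') *\<^sub>R mat 1))
      = ?\<Phi>"
    "(LINT z:(A2 :: (real^'n) set)|lborel. mvn_density z (b *\<^sub>R ones) ((1/\<beta>') *\<^sub>R mat 1)) = ?\<Phi>"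
    using isotropic_gaussian_masses(2)[OF \<beta>'(2), of b, where 'n='n]
      isotropic_gaussian_masses(3)[OF \<beta>'(2), of "-b", where 'n='n]
      halfspace_gaussian_argument[OF \<beta>'(1), of "CARD('n)" b] by simp_all
  then show "(\<integral>z. min (tempered_mixture b \<beta> z) (tempered_mixture b \<beta>' (z::real^'n)) \<partial>lborel)
         \<ge> 2 * (\<beta>/\<beta>') powr (real CARD('n)/2) * ?\<Phi>"
    unfolding split piecewise(2) using A1(2) A2(2) by simp
qed

lemma beta_seq_props:
  assumes M: "M \<ge> 1"
  shows "beta_seq M k > 0" "k < M \<Longrightarrow> beta_seq M k \<le> beta_seq M (Suc k)"
    "beta_seq M k / beta_seq M (Suc k) = real M powr (- 1 / real M)"
proof -
  show "beta_seq M k > 0" using M by (simp add: beta_seq_def)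
  show "k < M \<Longrightarrow> beta_seq M k \<le> beta_seq M (Suc k)"
    unfolding beta_seq_def using M by (intro powr_mono) (auto simp: divide_right_mono)
  have "beta_seq M k / beta_seq M (Suc k)
      = real M powr ((- (real M - real k) / real M) - (- (real M - real (Suc k)) / real M))"
    unfolding beta_seq_def using M by (simp add: powr_diff)
  also have "(- (real M - real k) / real M) - (- (real M - real (Suc k)) / real M) = - 1 / real M"
    using M by (simp add: field_simps)
  finally show "beta_seq M k / beta_seq M (Suc k) = real M powr (- 1 / real M)" .
qed

lemma pi_k_eq_tempered_mixture:
  fixes b :: real and k :: nat
  defines "\<beta> \<equiv> beta_seq CARD('n) k"
  shows "pi_k b k (z::real^'n)
       = tempered_mixture b \<beta> z / (2 * std_normal_cdf (b * sqrt (real CARD('n)) * sqrt \<beta>))"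
proof -
  have \<beta>: "\<beta> > 0" unfolding \<beta>_def by (rule beta_seq_props(1)) (simp add: Suc_leI)
  have "(LINT y|lborel. tilde_pi b (y::real^'n) powr \<beta>)
      = tempering_const CARD('n) \<beta> * (LINT y|lborel. tempered_mixture b \<beta> (y::real^'n))"
    by (simp add: tilde_pi_powr[OF \<beta>])
  then show ?thesis
    unfolding pi_k_def \<beta>_def[symmetric] tilde_pi_powr[OF \<beta>] tempered_mixture_integral(2)[OF \<beta>]
    using tempering_const_pos[OF \<beta>, of "CARD('n)"] by simp
qed

(* Second part of the theorem.  Since the normalising masses lie in [1, 2], the overlap of
   pi_k and pi_(k+1) is at least half the overlap of the tempered mixtures. *)
lemma pi_k_overlap:
  assumes b: "b > 0" and k: "k < CARD('n)"
  shows "(LINT z|lborel. min (pi_k b k z) (pi_k b (Suc k) (z :: real^'n)))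
            \<ge> 1 / (2 * sqrt (real CARD('n)))"
proof -
  have M: "CARD('n) \<ge> 1" by (simp add: Suc_leI)
  define \<beta> where "\<beta> = beta_seq CARD('n) k"
  define \<beta>' where "\<beta>' = beta_seq CARD('n) (Suc k)"
  have \<beta>: "0 < \<beta>" "\<beta> \<le> \<beta>'" "0 < \<beta>'"
    using beta_seq_props[OF M] k by (simp_all add: \<beta>_def \<beta>'_def)
  let ?g = "tempered_mixture b \<beta> :: real^'n \<Rightarrow> real"
  let ?g' = "tempered_mixture b \<beta>' :: real^'n \<Rightarrow> real"
  have half: "tempered_mixture b \<gamma> z / 2
      \<le> tempered_mixture b \<gamma> z / (2 * std_normal_cdf (b * sqrt (real CARD('n)) * sqrt \<gamma>))"
    if "\<gamma> > 0" for \<gamma> and z :: "real^'n"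
  proof -
    have "1/2 \<le> std_normal_cdf (b * sqrt (real CARD('n)) * sqrt \<gamma>)"
      using b that by (intro std_normal_cdf_ge_half) simp
    then show ?thesis
      using tempered_mixture_nonneg[OF that] std_normal_cdf_le_1 by (intro divide_left_mono) auto
  qed
  have "(\<integral>z. min (?g z) (?g' z) / 2 \<partial>lborel) \<le> (LINT z|lborel. min (pi_k b k z) (pi_k b (Suc k) (z :: real^'n)))"
  proof (rule integral_mono)
    show "integrable lborel (\<lambda>z. min (pi_k b k z) (pi_k b (Suc k) (z :: real^'n)))"
      unfolding pi_k_eq_tempered_mixture \<beta>_def[symmetric] \<beta>'_def[symmetric]
      using tempered_mixture_integral(1)[OF \<beta>(1), of b, where 'n='n]
        tempered_mixture_integral(1)[OF \<beta>(3), of b, where 'n='n] by auto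
    show "min (?g z) (?g' z) / 2 \<le> min (pi_k b k z) (pi_k b (Suc k) z)" for z
      unfolding pi_k_eq_tempered_mixture \<beta>_def[symmetric] \<beta>'_def[symmetric]
      using half[OF \<beta>(1), of z] half[OF \<beta>(3), of z] by linarith
  qed (use tempered_mixture_overlap(1)[OF \<beta>(1,2), of b, where 'n='n] in auto)
  moreover have "(\<beta>/\<beta>') powr (real CARD('n)/2) * std_normal_cdf (b * sqrt (real CARD('n)) * sqrt \<beta>')
      \<le> (\<integral>z. min (?g z) (?g' z) / 2 \<partial>lborel)"
    using tempered_mixture_overlap(2)[OF \<beta>(1,2), where 'n='n, of b] by simp
  moreover have "1 / sqrt (real CARD('n)) * (1/2)
      \<le> (\<beta>/\<beta>') powr (real CARD('n)/2) * std_normal_cdf (b * sqrt (real CARD('n)) * sqrt \<beta>')"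
    using temper_factor_ge_inverse_sqrt[OF \<beta>(1,2) _ M] beta_seq_props(3)[OF M, of k] b \<beta>(3)
      std_normal_cdf_ge_half[of "b * sqrt (real CARD('n)) * sqrt \<beta>'"]
    by (intro mult_mono) (auto simp: \<beta>_def \<beta>'_def)
  ultimately show ?thesis by simp
qed

theorem mainTheorem11:
  fixes b :: real
  assumes "b > 0"
  shows "(\<forall>\<beta> \<beta>'. 0 < \<beta> \<and> \<beta> \<le> \<beta>' \<and>
            \<beta> / \<beta>' \<ge> real CARD('n) powr (- 1 / real CARD('n)) \<longrightarrow>
          (LINT z:(A2 :: (real^'n) set)|lborel.
              min (mvn_density z (b *\<^sub>R ones) ((1 / \<beta>) *\<^sub>R mat 1))
                  (mvn_density z (b *\<^sub>R ones) ((1 / \<beta>') *\<^sub>R mat 1)))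
            \<ge> 1 / sqrt (real CARD('n)) * std_normal_cdf (b * sqrt (real CARD('n)) * sqrt \<beta>')
          \<and> 1 / sqrt (real CARD('n)) * std_normal_cdf (b * sqrt (real CARD('n)) * sqrt \<beta>')
            \<ge> 1 / (2 * sqrt (real CARD('n))))
       \<and> (\<forall>k < CARD('n).
          (LINT z|lborel. min (pi_k b k z) (pi_k b (Suc k) (z :: real^'n)))
            \<ge> 1 / (2 * sqrt (real CARD('n))))"
proof (intro conjI allI impI)
  fix \<beta> \<beta>' :: real
  assume \<beta>: "0 < \<beta> \<and> \<beta> \<le> \<beta>' \<and> \<beta> / \<beta>' \<ge> real CARD('n) powr (- 1 / real CARD('n))"
  then show "(LINT z:(A2 :: (real^'n) set)|lborel.
              min (mvn_density z (b *\<^sub>R ones) ((1 / \<beta>) *\<^sub>R mat 1))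
                  (mvn_density z (b *\<^sub>R ones) ((1 / \<beta>') *\<^sub>R mat 1)))
            \<ge> 1 / sqrt (real CARD('n)) * std_normal_cdf (b * sqrt (real CARD('n)) * sqrt \<beta>')"
    using tempered_gaussians_overlap_A2[OF assms] by blast
  have "std_normal_cdf (b * sqrt (real CARD('n)) * sqrt \<beta>') \<ge> 1/2"
    using assms \<beta> by (intro std_normal_cdf_ge_half) simp
  then show "1 / sqrt (real CARD('n)) * std_normal_cdf (b * sqrt (real CARD('n)) * sqrt \<beta>')
            \<ge> 1 / (2 * sqrt (real CARD('n)))"
    by (simp add: field_simps)
next
  fix k assume "k < CARD('n)"
  then show "(LINT z|lborel. min (pi_k b k z) (pi_k b (Suc k) (z :: real^'n)))
            \<ge> 1 / (2 * sqrt (real CARD('n)))"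
    by (rule pi_k_overlap[OF assms])
qed

end
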